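(* Let $G$ and $H$ be finite simple graphs without isolated vertices. Then: (i) there are no such graphs $G,H$ with $\gamma_{tR}(G\times H)\in\{1,2,3,5\}$; (ii) $\gamma_{tR}(G\times H)=4$ if and only if $G$ and $H$ are both isomorphic to $K_2$; (iii) $\gamma_{tR}(G\times H)=6$ if and only if ($G$ and $H$ each have at least two universal vertices and at least one of them has order at least three), or (one factor is $K_2$ and the other has order at least three and contains a universal vertex), or ($G$ and $H$ are both triangle centered); (iv) $\gamma_{tR}(G\times H)=7$ if and only if both $G$ and $H$ have a universal vertex, one of $G$ and $H$ has exactly one universal vertex and the other one is different from $K_2$, and at most one of $G$ and $H$ is triangle centered; (v) if at most one of $G$ and $H$ has a universal vertex, $\gamma_t(G)=\gamma_t(H)=2$, and $G$ and $H$ are not both triangle centered, then $\gamma_{tR}(G\times H)=8$.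
   Context: A total Roman dominating function on $G$ is a map $f:V(G)\to\{0,1,2\}$ such that every vertex with label 0 has a neighbor with label 2 and the subgraph induced by vertices with positive labels has no isolated vertices; $\gamma_{tR}(G)$ is the minimum of $\sum_v f(v)$ over such $f$. $\gamma_t(G)$ is the minimum size of a set $D$ such that every vertex of $G$ has a neighbor in $D$. A universal vertex of $G$ is a vertex adjacent to all other vertices. $G$ is triangle centered if it contains a triangle $xyz$ such that every vertex of $G$ is adjacent to at least two vertices of $\{x,y,z\}$. The direct product $G\times H$ has vertex set $V(G)\times V(H)$, with $(g,h)(g',h')$ an edge iff $gg'\in E(G)$ and $hh'\in E(H)$. *)

theory Defs
  imports Main
begin

definition simple_graph :: "'a set \<Rightarrow> ('a \<Rightarrow> 'a \<Rightarrow> bool) \<Rightarrow> bool" where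
  "simple_graph V E \<longleftrightarrow> finite V \<and> (\<forall>x y. E x y \<longrightarrow> x \<in> V \<and> y \<in> V)
     \<and> (\<forall>x y. E x y \<longrightarrow> E y x) \<and> (\<forall>x. \<not> E x x)"

definition no_isolated :: "'a set \<Rightarrow> ('a \<Rightarrow> 'a \<Rightarrow> bool) \<Rightarrow> bool" where
  "no_isolated V E \<longleftrightarrow> (\<forall>v\<in>V. \<exists>u\<in>V. E v u)"

definition dprod_edges :: "('a \<Rightarrow> 'a \<Rightarrow> bool) \<Rightarrow> ('b \<Rightarrow> 'b \<Rightarrow> bool)
    \<Rightarrow> ('a \<times> 'b) \<Rightarrow> ('a \<times> 'b) \<Rightarrow> bool" where
  "dprod_edges E1 E2 p q \<longleftrightarrow> E1 (fst p) (fst q) \<and> E2 (snd p) (snd q)"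

definition is_trdf :: "'a set \<Rightarrow> ('a \<Rightarrow> 'a \<Rightarrow> bool) \<Rightarrow> ('a \<Rightarrow> nat) \<Rightarrow> bool" where
  "is_trdf V E f \<longleftrightarrow> (\<forall>v\<in>V. f v \<le> 2)
     \<and> (\<forall>v\<in>V. f v = 0 \<longrightarrow> (\<exists>u\<in>V. E v u \<and> f u = 2))
     \<and> (\<forall>v\<in>V. 0 < f v \<longrightarrow> (\<exists>u\<in>V. E v u \<and> 0 < f u))"

definition gamma_tR :: "'a set \<Rightarrow> ('a \<Rightarrow> 'a \<Rightarrow> bool) \<Rightarrow> nat" where
  "gamma_tR V E = Min {sum f V | f. is_trdf V E f}"

definition is_tds :: "'a set \<Rightarrow> ('a \<Rightarrow> 'a \<Rightarrow> bool) \<Rightarrow> 'a set \<Rightarrow> bool" where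
  "is_tds V E D \<longleftrightarrow> D \<subseteq> V \<and> (\<forall>v\<in>V. \<exists>u\<in>D. E v u)"

definition gamma_t :: "'a set \<Rightarrow> ('a \<Rightarrow> 'a \<Rightarrow> bool) \<Rightarrow> nat" where
  "gamma_t V E = Min {card D | D. is_tds V E D}"

definition universal :: "'a set \<Rightarrow> ('a \<Rightarrow> 'a \<Rightarrow> bool) \<Rightarrow> 'a \<Rightarrow> bool" where
  "universal V E u \<longleftrightarrow> u \<in> V \<and> (\<forall>v\<in>V. v \<noteq> u \<longrightarrow> E u v)"

definition num_universal :: "'a set \<Rightarrow> ('a \<Rightarrow> 'a \<Rightarrow> bool) \<Rightarrow> nat" where
  "num_universal V E = card {u. universal V E u}"

definition triangle_centered :: "'a set \<Rightarrow> ('a \<Rightarrow> 'a \<Rightarrow> bool) \<Rightarrow> bool" where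
  "triangle_centered V E \<longleftrightarrow> (\<exists>x\<in>V. \<exists>y\<in>V. \<exists>z\<in>V. E x y \<and> E y z \<and> E x z \<and>
      (\<forall>v\<in>V. 2 \<le> card {w \<in> {x, y, z}. E v w}))"

definition graph_iso :: "'a set \<Rightarrow> ('a \<Rightarrow> 'a \<Rightarrow> bool) \<Rightarrow> 'b set \<Rightarrow> ('b \<Rightarrow> 'b \<Rightarrow> bool) \<Rightarrow> bool" where
  "graph_iso V1 E1 V2 E2 \<longleftrightarrow> (\<exists>h. bij_betw h V1 V2 \<and>
      (\<forall>x\<in>V1. \<forall>y\<in>V1. E1 x y \<longleftrightarrow> E2 (h x) (h y)))"

definition K2_V :: "nat set" where "K2_V = {0, 1}"
definition K2_E :: "nat \<Rightarrow> nat \<Rightarrow> bool" where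
  "K2_E x y \<longleftrightarrow> x \<in> K2_V \<and> y \<in> K2_V \<and> x \<noteq> y"

definition is_K2 :: "'a set \<Rightarrow> ('a \<Rightarrow> 'a \<Rightarrow> bool) \<Rightarrow> bool" where
  "is_K2 V E \<longleftrightarrow> graph_iso V E K2_V K2_E"

end

theory Submission
  imports Defs
begin

text \<open>
  A total Roman dominating function on \<open>G \<times> H\<close> is determined by the set \<open>P\<close> of
  positively labelled vertices and the set \<open>A \<subseteq> P\<close> of vertices labelled 2: \<open>P\<close> is a
  total dominating set, every vertex outside \<open>P\<close> has a neighbour in \<open>A\<close>, and the weight
  is \<open>|P| + |A|\<close>.  The upper bounds are explicit pairs built from universal vertices, from
  the central triangles of triangle centered graphs, or from products of total dominating sets.
  For the lower bounds, a vertex \<open>(g, h)\<close> lies in \<open>P\<close> as soon as no vertex of \<open>A\<close> is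
  adjacent to it.  Hence, if \<open>A\<close> meets only one row \<open>{x} \<times> VH\<close>, that row and the rows of
  all non-neighbours of \<open>x\<close> lie in \<open>P\<close>, so a light pair forces \<open>x\<close> to be universal; the
  few remaining configurations of a pair of weight at most 7 force universal vertices or two
  triangle centered factors.  Every statement about \<open>G \<times> H\<close> transfers to \<open>H \<times> G\<close>, which
  halves the case analysis.
\<close>

lemma two_le_card_three_iff:
  assumes "x \<noteq> y" "x \<noteq> z" "y \<noteq> z"
  shows "2 \<le> card {w \<in> {x, y, z}. P w} \<longleftrightarrow> (P x \<and> P y) \<or> (P x \<and> P z) \<or> (P y \<and> P z)"
proof -
  have "card {w \<in> {x, y, z}. P w} = (\<Sum>w\<in>{x, y, z}. of_bool (P w))"
    by (simp add: Int_def)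
  also have "\<dots> = of_bool (P x) + of_bool (P y) + of_bool (P z)"
    using assms by simp
  finally have card: "card {w \<in> {x, y, z}. P w} = of_bool (P x) + of_bool (P y) + of_bool (P z)" .
  show ?thesis by (simp only: card) (cases "P x"; cases "P y"; cases "P z"; simp)
qed

lemma card_add_two_le:
  assumes "finite P" "Q \<subseteq> P" "p \<in> P - Q" "q \<in> P - Q" "p \<noteq> q"
  shows "card Q + 2 \<le> card P"
proof -
  have "card (insert p (insert q Q)) = card Q + 2"
    using assms finite_subset by fastforce
  moreover have "insert p (insert q Q) \<subseteq> P" using assms by blast
  ultimately show ?thesis using card_mono[OF assms(1)] by metis
qed

lemma card_2_pairsE:
  assumes "card A = 2"
  obtains x1 y1 x2 y2 where "A = {(x1, y1), (x2, y2)}" "(x1, y1) \<noteq> (x2, y2)"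
  using assms by (metis card_2_iff prod.collapse)

lemma card_3_thirdE:
  assumes "card A = 3" "a \<in> A" "a' \<in> A" "a \<noteq> a'"
  obtains c where "A = {a, a', c}" "c \<noteq> a" "c \<noteq> a'"
proof -
  have "finite A" by (rule card_ge_0_finite) (simp add: assms(1))
  then have "card (A - {a, a'}) = 1" using assms by (simp add: card_Diff_subset)
  then obtain c where "A - {a, a'} = {c}" by (auto simp: card_1_singleton_iff)
  then show ?thesis using that assms(2,3) by blast
qed

section \<open>Total Roman dominating functions as pairs of sets\<close>

definition total_roman_pair :: "'a set \<Rightarrow> ('a \<Rightarrow> 'a \<Rightarrow> bool) \<Rightarrow> 'a set \<Rightarrow> 'a set \<Rightarrow> bool" where
  "total_roman_pair V E P A \<longleftrightarrow> is_tds V E P \<and> A \<subseteq> P \<and> (\<forall>v\<in>V - P. \<exists>u\<in>A. E v u)"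

definition roman_labelling :: "'a set \<Rightarrow> 'a set \<Rightarrow> 'a \<Rightarrow> nat" where
  "roman_labelling P A v = (if v \<in> A then 2 else if v \<in> P then 1 else 0)"

lemma is_trdf_roman_labelling:
  assumes "total_roman_pair V E P A"
  shows "is_trdf V E (roman_labelling P A)"
  unfolding is_trdf_def
proof (intro conjI ballI impI)
  fix v assume "v \<in> V"
  show "roman_labelling P A v \<le> 2" by (simp add: roman_labelling_def)
next
  fix v assume "v \<in> V" "roman_labelling P A v = 0"
  then have "v \<in> V - P" by (auto simp: roman_labelling_def split: if_splits)
  then obtain u where "u \<in> A" "E v u" using assms by (auto simp: total_roman_pair_def)
  moreover have "u \<in> V" using \<open>u \<in> A\<close> assms by (auto simp: total_roman_pair_def is_tds_def)
  ultimately show "\<exists>u\<in>V. E v u \<and> roman_labelling P A u = 2"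
    by (auto simp: roman_labelling_def)
next
  fix v assume "v \<in> V"
  then obtain u where "u \<in> P" "E v u" using assms by (auto simp: total_roman_pair_def is_tds_def)
  moreover have "u \<in> V" using \<open>u \<in> P\<close> assms by (auto simp: total_roman_pair_def is_tds_def)
  ultimately show "\<exists>u\<in>V. E v u \<and> 0 < roman_labelling P A u"
    by (auto simp: roman_labelling_def)
qed

lemma sum_roman_labelling:
  assumes "finite V" "A \<subseteq> P" "P \<subseteq> V"
  shows "sum (roman_labelling P A) V = card P + card A"
proof -
  have "sum (roman_labelling P A) V = (\<Sum>v\<in>V. of_bool (v \<in> P) + of_bool (v \<in> A))"
    using assms(2) by (intro sum.cong) (auto simp: roman_labelling_def)
  also have "\<dots> = card (V \<inter> P) + card (V \<inter> A)"
    using assms(1) by (simp add: sum.distrib)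
  also have "\<dots> = card P + card A"
    using assms(2,3) by (simp add: Int_absorb1)
  finally show ?thesis .
qed

lemma total_roman_pair_trdf:
  assumes "is_trdf V E f"
  shows "total_roman_pair V E {v\<in>V. 0 < f v} {v\<in>V. f v = 2}"
  using assms unfolding total_roman_pair_def is_tds_def is_trdf_def by fastforce

lemma sum_trdf:
  assumes "is_trdf V E f" "finite V"
  shows "sum f V = card {v\<in>V. 0 < f v} + card {v\<in>V. f v = 2}"
proof -
  have "sum f V = sum (roman_labelling {v\<in>V. 0 < f v} {v\<in>V. f v = 2}) V"
  proof (rule sum.cong)
    fix v assume "v \<in> V"
    then have "f v \<le> 2" using assms(1) by (simp add: is_trdf_def)
    with \<open>v \<in> V\<close> show "f v = roman_labelling {v\<in>V. 0 < f v} {v\<in>V. f v = 2} v"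
      by (auto simp: roman_labelling_def)
  qed simp
  also have "\<dots> = card {v\<in>V. 0 < f v} + card {v\<in>V. f v = 2}"
    using assms(2) by (rule sum_roman_labelling) auto
  finally show ?thesis .
qed

lemma finite_trdf_weights:
  assumes "finite V"
  shows "finite {sum f V | f. is_trdf V E f}"
proof -
  have "sum f V \<le> 2 * card V" if "is_trdf V E f" for f
  proof -
    have "sum f V \<le> sum (\<lambda>_. 2) V"
      using that by (intro sum_mono) (simp add: is_trdf_def)
    then show ?thesis by simp
  qed
  then have "{sum f V | f. is_trdf V E f} \<subseteq> {..2 * card V}" by (blast intro: atMost_iff[THEN iffD2])
  then show ?thesis by (rule finite_subset) simp
qed

lemma gamma_tR_le:
  assumes "finite V" "total_roman_pair V E P A"
  shows "gamma_tR V E \<le> card P + card A"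
proof -
  have "A \<subseteq> P" "P \<subseteq> V" using assms(2) by (auto simp: total_roman_pair_def is_tds_def)
  then have "sum (roman_labelling P A) V = card P + card A"
    by (rule sum_roman_labelling[OF assms(1)])
  then have "card P + card A \<in> {sum f V | f. is_trdf V E f}"
    using is_trdf_roman_labelling[OF assms(2)] by (auto intro!: exI[of _ "roman_labelling P A"])
  then show ?thesis
    unfolding gamma_tR_def using finite_trdf_weights[OF assms(1)] by simp
qed

lemma is_tds_self_iff: "is_tds V E V \<longleftrightarrow> no_isolated V E"
  by (simp add: is_tds_def no_isolated_def)

lemma total_roman_pair_tds: "is_tds V E D \<Longrightarrow> total_roman_pair V E D D"
  by (auto simp: total_roman_pair_def is_tds_def)

lemma total_roman_pair_all: "no_isolated V E \<Longrightarrow> total_roman_pair V E V {}"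
  by (simp add: total_roman_pair_def is_tds_self_iff)

lemma gamma_tR_attained:
  assumes "finite V" "no_isolated V E"
  obtains P A where "total_roman_pair V E P A" "gamma_tR V E = card P + card A"
proof -
  have "{sum f V | f. is_trdf V E f} \<noteq> {}"
    using is_trdf_roman_labelling[OF total_roman_pair_all[OF assms(2)]] by blast
  then have "gamma_tR V E \<in> {sum f V | f. is_trdf V E f}"
    unfolding gamma_tR_def using finite_trdf_weights[OF assms(1)] by (rule Min_in[rotated])
  then obtain f where f: "is_trdf V E f" "gamma_tR V E = sum f V" by blast
  have "sum f V = card {v\<in>V. 0 < f v} + card {v\<in>V. f v = 2}"
    by (rule sum_trdf[OF f(1) assms(1)])
  then show ?thesis using that[OF total_roman_pair_trdf[OF f(1)]] f(2) by simp
qed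

lemma gamma_tR_le_twice_tds:
  "finite V \<Longrightarrow> is_tds V E D \<Longrightarrow> gamma_tR V E \<le> 2 * card D"
  using gamma_tR_le total_roman_pair_tds by fastforce

lemma gamma_tR_le_card:
  "finite V \<Longrightarrow> no_isolated V E \<Longrightarrow> gamma_tR V E \<le> card V"
  using gamma_tR_le total_roman_pair_all by fastforce

lemma gamma_t_attained:
  assumes "finite V" "no_isolated V E"
  obtains D where "is_tds V E D" "card D = gamma_t V E"
proof -
  have "{card D | D. is_tds V E D} \<subseteq> {..card V}"
    using card_mono[OF assms(1)] by (auto simp: is_tds_def)
  then have "finite {card D | D. is_tds V E D}"
    by (rule finite_subset) simp
  moreover have "{card D | D. is_tds V E D} \<noteq> {}"
    using assms(2) is_tds_self_iff by blast
  ultimately have "gamma_t V E \<in> {card D | D. is_tds V E D}"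
    unfolding gamma_t_def by (rule Min_in)
  then show ?thesis using that by auto
qed

lemma gamma_tR_empty [simp]: "gamma_tR {} E = 0"
proof -
  have "{sum f {} | f. is_trdf {} E f} = {0}" by (auto simp: is_trdf_def)
  then show ?thesis by (simp add: gamma_tR_def)
qed

lemma gamma_t_empty [simp]: "gamma_t {} E = 0"
proof -
  have "{card D | D. is_tds {} E D} = {0}" by (auto simp: is_tds_def)
  then show ?thesis by (simp add: gamma_t_def)
qed

lemma num_universal_empty [simp]: "num_universal {} E = 0"
  by (simp add: num_universal_def universal_def)

lemma triangle_centered_empty [simp]: "\<not> triangle_centered {} E"
  by (simp add: triangle_centered_def)

lemma card_is_K2: "is_K2 V E \<Longrightarrow> card V = 2"
  unfolding is_K2_def graph_iso_def K2_V_def by (auto dest: bij_betw_same_card)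

locale nonisolated_graph =
  fixes V :: "'a set" and E :: "'a \<Rightarrow> 'a \<Rightarrow> bool"
  assumes simple: "simple_graph V E" and no_isolated: "no_isolated V E" and nonempty: "V \<noteq> {}"
begin

lemma finite_vertices: "finite V"
  using simple by (simp add: simple_graph_def)

lemma adj_sym: "E x y \<Longrightarrow> E y x"
  using simple by (simp add: simple_graph_def)

lemma adj_irrefl [simp]: "\<not> E x x"
  using simple by (simp add: simple_graph_def)

lemma adj_neq: "E x y \<Longrightarrow> x \<noteq> y"
  by auto

lemma adj_vertices: "E x y \<Longrightarrow> x \<in> V" "E x y \<Longrightarrow> y \<in> V"
  using simple by (simp_all add: simple_graph_def)

lemma neighbourE:
  assumes "x \<in> V"
  obtains y where "E x y"
  using assms no_isolated by (auto simp: no_isolated_def)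

lemma card_ge_2: "2 \<le> card V"
proof -
  obtain x where "x \<in> V" using nonempty by blast
  obtain y where "E x y" using neighbourE[OF \<open>x \<in> V\<close>] .
  then have "{x, y} \<subseteq> V" "x \<noteq> y" using \<open>x \<in> V\<close> adj_vertices(2) by auto
  then show ?thesis using card_mono[OF finite_vertices \<open>{x, y} \<subseteq> V\<close>] by simp
qed

lemma other_vertex: "\<exists>v\<in>V. v \<noteq> u"
proof (rule ccontr)
  assume "\<not> ?thesis"
  then have "V \<subseteq> {u}" by blast
  then show False using card_ge_2 card_mono[of "{u}" V] by simp
qed

lemma universal_adj: "universal V E u \<Longrightarrow> v \<in> V \<Longrightarrow> v \<noteq> u \<Longrightarrow> E v u"
  by (auto simp: universal_def intro: adj_sym)

lemma finite_universal: "finite {u. universal V E u}"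
  using finite_vertices by (rule finite_subset[rotated]) (auto simp: universal_def)

lemma one_le_num_universal_iff: "1 \<le> num_universal V E \<longleftrightarrow> (\<exists>u. universal V E u)"
  unfolding num_universal_def using finite_universal by (simp add: Suc_le_eq card_gt_0_iff)

lemma two_le_num_universal_iff:
  "2 \<le> num_universal V E \<longleftrightarrow> (\<exists>u v. u \<noteq> v \<and> universal V E u \<and> universal V E v)"
proof
  assume "2 \<le> num_universal V E"
  then have "\<not> card {u. universal V E u} \<le> Suc 0" unfolding num_universal_def by simp
  then show "\<exists>u v. u \<noteq> v \<and> universal V E u \<and> universal V E v"
    using card_le_Suc0_iff_eq[OF finite_universal] by blast
next
  assume "\<exists>u v. u \<noteq> v \<and> universal V E u \<and> universal V E v"
  then obtain u v where "u \<noteq> v" "{u, v} \<subseteq> {u. universal V E u}" by blast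
  then show "2 \<le> num_universal V E"
    unfolding num_universal_def using card_mono[OF finite_universal, of "{u, v}"] by simp
qed

lemma card_2_edgeE:
  assumes "card V = 2"
  obtains a b where "V = {a, b}" "a \<noteq> b" "E a b"
proof -
  obtain a b where ab: "V = {a, b}" "a \<noteq> b" using assms by (meson card_2_iff)
  have "a \<in> V" using ab by simp
  then obtain c where "E a c" by (rule neighbourE)
  then have "c \<in> {a, b}" "c \<noteq> a" using adj_vertices(2) ab by auto
  then have "c = b" by simp
  then show ?thesis using that ab \<open>E a c\<close> by blast
qed

lemma universal_if_card_2: "card V = 2 \<Longrightarrow> v \<in> V \<Longrightarrow> universal V E v"
  by (erule card_2_edgeE) (auto simp: universal_def dest: adj_sym)

lemma num_universal_card_2:
  assumes "card V = 2"
  shows "num_universal V E = 2"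
proof -
  have "{u. universal V E u} = V"
    using universal_if_card_2[OF assms] by (auto simp: universal_def)
  then show ?thesis using assms by (simp add: num_universal_def)
qed

lemma is_K2_iff_card: "is_K2 V E \<longleftrightarrow> card V = 2"
proof
  assume "card V = 2"
  then obtain a b where ab: "V = {a, b}" "a \<noteq> b" "E a b" by (rule card_2_edgeE)
  define h where "h v = (if v = a then 0 else 1 :: nat)" for v
  have "bij_betw h V K2_V" using ab by (auto simp: bij_betw_def inj_on_def h_def K2_V_def)
  moreover have "\<forall>x\<in>V. \<forall>y\<in>V. E x y \<longleftrightarrow> K2_E (h x) (h y)"
    using ab adj_sym by (auto simp: K2_E_def K2_V_def h_def)
  ultimately show "is_K2 V E" unfolding is_K2_def graph_iso_def by blast
qed (rule card_is_K2)

lemma exists_universal_if_card_le_3: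
  assumes "card V \<le> 3"
  shows "\<exists>u. universal V E u"
proof -
  obtain a where a: "a \<in> V" using nonempty by blast
  obtain b where ab: "E a b" using neighbourE[OF a] .
  show ?thesis
  proof (cases "V \<subseteq> {a, b}")
    case True
    then have "universal V E a" using ab a by (auto simp: universal_def)
    then show ?thesis by blast
  next
    case False
    then obtain c where c: "c \<in> V" "c \<noteq> a" "c \<noteq> b" by blast
    have "a \<noteq> b" using ab by auto
    then have sub: "{a, b, c} \<subseteq> V" and "card {a, b, c} = 3" using a c adj_vertices(2)[OF ab] by auto
    then have "card {a, b, c} = card V" using card_mono[OF finite_vertices sub] assms by simp
    then have V: "V = {a, b, c}" using card_subset_eq[OF finite_vertices sub] by simp
    show ?thesis
    proof (cases "E a c")
      case True
      then have "universal V E a" using ab V by (auto simp: universal_def)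
      then show ?thesis by blast
    next
      case False
      obtain d where "E c d" using neighbourE[OF \<open>c \<in> V\<close>] .
      moreover have "d \<in> {a, b, c}" using adj_vertices(2)[OF \<open>E c d\<close>] V by simp
      moreover have "d \<noteq> a" using False adj_sym \<open>E c d\<close> by auto
      ultimately have "E c b" by auto
      then have "universal V E b" using ab V adj_sym by (auto simp: universal_def)
      then show ?thesis by blast
    qed
  qed
qed

lemma triangle_centered_iff:
  "triangle_centered V E \<longleftrightarrow> (\<exists>x y z. E x y \<and> E y z \<and> E x z \<and>
     (\<forall>v\<in>V. (E v x \<and> E v y) \<or> (E v x \<and> E v z) \<or> (E v y \<and> E v z)))"
proof -
  have iff: "2 \<le> card {w \<in> {x, y, z}. E v w} \<longleftrightarrow> (E v x \<and> E v y) \<or> (E v x \<and> E v z) \<or> (E v y \<and> E v z)"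
    if "E x y" "E y z" "E x z" for x y z v
    using that by (intro two_le_card_three_iff) auto
  show ?thesis
    unfolding triangle_centered_def
  proof (intro iffI; elim bexE exE conjE)
    fix x y z
    assume "E x y" "E y z" "E x z" "\<forall>v\<in>V. 2 \<le> card {w \<in> {x, y, z}. E v w}"
    then show "\<exists>x y z. E x y \<and> E y z \<and> E x z \<and>
     (\<forall>v\<in>V. (E v x \<and> E v y) \<or> (E v x \<and> E v z) \<or> (E v y \<and> E v z))"
      using iff by blast
  next
    fix x y z
    assume "E x y" "E y z" "E x z" "\<forall>v\<in>V. (E v x \<and> E v y) \<or> (E v x \<and> E v z) \<or> (E v y \<and> E v z)"
    moreover from this have "x \<in> V" "y \<in> V" "z \<in> V" using adj_vertices by blast+
    ultimately show "\<exists>x\<in>V. \<exists>y\<in>V. \<exists>z\<in>V. E x y \<and> E y z \<and> E x z \<and>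
      (\<forall>v\<in>V. 2 \<le> card {w \<in> {x, y, z}. E v w})"
      using iff by blast
  qed
qed

lemma card_ge_3_if_triangle_centered:
  assumes "triangle_centered V E"
  shows "3 \<le> card V"
proof -
  obtain x y z where "E x y" "E y z" "E x z" using assms triangle_centered_iff by blast
  moreover from this have "x \<noteq> y" "y \<noteq> z" "x \<noteq> z" by auto
  ultimately have sub: "{x, y, z} \<subseteq> V" and "card {x, y, z} = 3" using adj_vertices by auto
  then show ?thesis using card_mono[OF finite_vertices sub] by simp
qed

lemma is_tds_universal:
  assumes "universal V E u" "v \<in> V" "v \<noteq> u"
  shows "is_tds V E {u, v}"
  unfolding is_tds_def
proof (intro conjI ballI)
  show "{u, v} \<subseteq> V" using assms by (simp add: universal_def)
next
  fix w assume "w \<in> V"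
  then show "\<exists>x\<in>{u, v}. E w x"
    using assms universal_adj by (cases "w = u") (auto simp: universal_def)
qed

lemma non_universalE:
  assumes "x \<in> V" "\<not> universal V E x"
  obtains v where "v \<in> V" "v \<noteq> x" "\<not> E x v"
  using assms by (auto simp: universal_def)

end

lemma is_tds_dprod:
  assumes "is_tds VG EG DG" "is_tds VH EH DH"
  shows "is_tds (VG \<times> VH) (dprod_edges EG EH) (DG \<times> DH)"
  using assms unfolding is_tds_def dprod_edges_def by fastforce

lemma no_isolated_dprod:
  "no_isolated VG EG \<Longrightarrow> no_isolated VH EH \<Longrightarrow> no_isolated (VG \<times> VH) (dprod_edges EG EH)"
  using is_tds_dprod by (metis is_tds_self_iff)

lemma total_roman_pair_swap:
  assumes "total_roman_pair (VG \<times> VH) (dprod_edges EG EH) P A"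
  shows "total_roman_pair (VH \<times> VG) (dprod_edges EH EG) (prod.swap ` P) (prod.swap ` A)"
proof -
  have P: "P \<subseteq> VG \<times> VH" "A \<subseteq> P" "\<forall>w\<in>VG \<times> VH. \<exists>u\<in>P. dprod_edges EG EH w u"
    and A: "\<forall>w\<in>VG \<times> VH - P. \<exists>u\<in>A. dprod_edges EG EH w u"
    using assms by (simp_all add: total_roman_pair_def is_tds_def)
  have swap: "\<exists>u\<in>prod.swap ` S. dprod_edges EH EG v u"
    if ex: "\<exists>u\<in>S. dprod_edges EG EH (prod.swap v) u" for v S
  proof -
    obtain u where "u \<in> S" "dprod_edges EG EH (prod.swap v) u" using ex ..
    then show ?thesis by (intro bexI[of _ "prod.swap u"]) (auto simp: dprod_edges_def)
  qed
  show ?thesis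
    unfolding total_roman_pair_def is_tds_def
  proof (intro conjI ballI)
    show "prod.swap ` P \<subseteq> VH \<times> VG" "prod.swap ` A \<subseteq> prod.swap ` P" using P(1,2) by auto
  next
    fix v assume "v \<in> VH \<times> VG"
    then have "prod.swap v \<in> VG \<times> VH" by auto
    then show "\<exists>u\<in>prod.swap ` P. dprod_edges EH EG v u" by (rule swap[OF bspec[OF P(3)]])
  next
    fix v assume "v \<in> VH \<times> VG - prod.swap ` P"
    then have "prod.swap v \<in> VG \<times> VH - P" by (auto simp: image_iff)
    then show "\<exists>u\<in>prod.swap ` A. dprod_edges EH EG v u" by (rule swap[OF bspec[OF A]])
  qed
qed

lemma is_trdf_swap:
  "is_trdf (VH \<times> VG) (dprod_edges EH EG) (f \<circ> prod.swap) \<longleftrightarrow> is_trdf (VG \<times> VH) (dprod_edges EG EH) f"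
  unfolding is_trdf_def dprod_edges_def by simp blast

lemma trdf_weights_dprod_swap:
  "{sum f (VG \<times> VH) | f. is_trdf (VG \<times> VH) (dprod_edges EG EH) f}
     \<subseteq> {sum f (VH \<times> VG) | f. is_trdf (VH \<times> VG) (dprod_edges EH EG) f}"
proof clarify
  fix f assume "is_trdf (VG \<times> VH) (dprod_edges EG EH) f"
  then have "is_trdf (VH \<times> VG) (dprod_edges EH EG) (f \<circ> prod.swap)"
    by (simp add: is_trdf_swap)
  moreover have "sum f (VG \<times> VH) = sum (f \<circ> prod.swap) (VH \<times> VG)"
    using sum.reindex[OF inj_swap[of "VH \<times> VG"], of f] unfolding product_swap .
  ultimately show "\<exists>g. sum f (VG \<times> VH) = sum g (VH \<times> VG) \<and> is_trdf (VH \<times> VG) (dprod_edges EH EG) g"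
    by (intro exI[of _ "f \<circ> prod.swap"] conjI)
qed

lemma gamma_tR_dprod_swap:
  "gamma_tR (VH \<times> VG) (dprod_edges EH EG) = gamma_tR (VG \<times> VH) (dprod_edges EG EH)"
  unfolding gamma_tR_def
  using trdf_weights_dprod_swap[of VG VH EG EH] trdf_weights_dprod_swap[of VH VG EH EG]
  by (simp add: subset_antisym)

lemma card_swap_image [simp]: "card (prod.swap ` S) = card S"
  by (rule card_image) (rule inj_swap)

locale graph_product =
  G: nonisolated_graph VG EG + H: nonisolated_graph VH EH
  for VG :: "'a set" and EG and VH :: "'b set" and EH
begin

abbreviation tr_pair :: "('a \<times> 'b) set \<Rightarrow> ('a \<times> 'b) set \<Rightarrow> bool" where
  "tr_pair P A \<equiv> total_roman_pair (VG \<times> VH) (dprod_edges EG EH) P A"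

abbreviation gamma_prod :: nat where
  "gamma_prod \<equiv> gamma_tR (VG \<times> VH) (dprod_edges EG EH)"

text \<open>
  A fact proved in this locale becomes available under the prefix \<open>swapped\<close> only in context
  blocks opened after it; this is why the development below is split into several blocks.
\<close>

sublocale swapped: graph_product VH EH VG EG
  by (rule graph_product.intro) (fact H.nonisolated_graph_axioms G.nonisolated_graph_axioms)+

lemma finite_product: "finite (VG \<times> VH)"
  using G.finite_vertices H.finite_vertices by simp

lemma card_product: "card (VG \<times> VH) = card VG * card VH"
  by (rule card_cartesian_product)

lemma card_product_ge: "2 * card VG \<le> card VG * card VH" "2 * card VH \<le> card VG * card VH"
  using mult_le_mono1[OF H.card_ge_2, of "card VG"] mult_le_mono1[OF G.card_ge_2, of "card VH"]
  by (simp_all add: mult.commute)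

lemma tr_pairD:
  assumes "tr_pair P A"
  shows "A \<subseteq> P" "P \<subseteq> VG \<times> VH" "finite P" "finite A"
proof -
  show "A \<subseteq> P" "P \<subseteq> VG \<times> VH" using assms by (auto simp: total_roman_pair_def is_tds_def)
  show "finite P" by (rule finite_subset[OF \<open>P \<subseteq> VG \<times> VH\<close> finite_product])
  then show "finite A" by (rule finite_subset[OF \<open>A \<subseteq> P\<close>])
qed

lemma tr_pair_neighbourE:
  assumes "tr_pair P A" "g \<in> VG" "h \<in> VH"
  obtains x y where "(x, y) \<in> P" "EG g x" "EH h y"
proof -
  have "\<forall>v\<in>VG \<times> VH. \<exists>u\<in>P. dprod_edges EG EH v u"
    using assms(1) by (simp add: total_roman_pair_def is_tds_def)
  then have "\<exists>u\<in>P. dprod_edges EG EH (g, h) u" using assms(2,3) by simp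
  then obtain u where "u \<in> P" "dprod_edges EG EH (g, h) u" ..
  then show ?thesis using that by (cases u) (simp add: dprod_edges_def)
qed

lemma tr_pair_dominatedE:
  assumes "tr_pair P A" "g \<in> VG" "h \<in> VH" "(g, h) \<notin> P"
  obtains x y where "(x, y) \<in> A" "EG g x" "EH h y"
proof -
  have "\<forall>v\<in>VG \<times> VH - P. \<exists>u\<in>A. dprod_edges EG EH v u"
    using assms(1) by (simp add: total_roman_pair_def)
  then have "\<exists>u\<in>A. dprod_edges EG EH (g, h) u" using assms(2-4) by simp
  then obtain u where "u \<in> A" "dprod_edges EG EH (g, h) u" ..
  then show ?thesis using that by (cases u) (simp add: dprod_edges_def)
qed

lemma tr_pair_memI:
  assumes "tr_pair P A" "g \<in> VG" "h \<in> VH"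
    and "\<forall>(x, y)\<in>A. \<not> (EG g x \<and> EH h y)"
  shows "(g, h) \<in> P"
proof (rule ccontr)
  assume "(g, h) \<notin> P"
  then obtain x y where "(x, y) \<in> A" "EG g x" "EH h y" by (rule tr_pair_dominatedE[OF assms(1-3)])
  then show False using assms(4) by auto
qed

lemma tr_pairI:
  assumes "is_tds (VG \<times> VH) (dprod_edges EG EH) P" "A \<subseteq> P"
    and "\<And>g h. g \<in> VG \<Longrightarrow> h \<in> VH \<Longrightarrow> (g, h) \<notin> P \<Longrightarrow> \<exists>x y. (x, y) \<in> A \<and> EG g x \<and> EH h y"
  shows "tr_pair P A"
  unfolding total_roman_pair_def
proof (intro conjI ballI)
  fix v assume "v \<in> VG \<times> VH - P"
  then obtain g h where v: "v = (g, h)" "g \<in> VG" "h \<in> VH" "(g, h) \<notin> P" by auto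
  then obtain x y where "(x, y) \<in> A" "EG g x" "EH h y" using assms(3) by blast
  then show "\<exists>u\<in>A. dprod_edges EG EH v u"
    using v(1) by (intro bexI[of _ "(x, y)"]) (simp_all add: dprod_edges_def)
qed (fact assms)+

lemma tr_pair_swap: "tr_pair P A \<Longrightarrow> swapped.tr_pair (prod.swap ` P) (prod.swap ` A)"
  by (rule total_roman_pair_swap)

lemma gamma_prod_swap: "swapped.gamma_prod = gamma_prod"
  by (rule gamma_tR_dprod_swap)

lemma gamma_prod_attained:
  obtains P A where "tr_pair P A" "gamma_prod = card P + card A"
  using gamma_tR_attained[OF finite_product no_isolated_dprod[OF G.no_isolated H.no_isolated]] .

end

section \<open>Lower bounds\<close>

context graph_product
begin

lemma tr_pair_empty:
  assumes "tr_pair P {}"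
  shows "P = VG \<times> VH"
proof
  show "VG \<times> VH \<subseteq> P" by (auto intro: tr_pair_memI[OF assms])
qed (rule tr_pairD(2)[OF assms])

lemma row_neighboursE:
  assumes "tr_pair P A" "x \<in> VG"
  obtains g1 h1 g2 h2 where "(g1, h1) \<in> P" "(g2, h2) \<in> P" "EG x g1" "EG x g2" "h1 \<noteq> h2"
proof -
  obtain h where "h \<in> VH" using H.nonempty by blast
  then obtain g1 h1 where 1: "(g1, h1) \<in> P" "EG x g1" "EH h h1"
    using tr_pair_neighbourE[OF assms] by metis
  then obtain g2 h2 where "(g2, h2) \<in> P" "EG x g2" "EH h1 h2"
    using tr_pair_neighbourE[OF assms(1,2) H.adj_vertices(2)] by metis
  then show ?thesis using that 1 by fastforce
qed

lemma card_ge_3: "tr_pair P A \<Longrightarrow> 3 \<le> card P"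
proof -
  assume v: "tr_pair P A"
  obtain x h where "x \<in> VG" "h \<in> VH" using G.nonempty H.nonempty by blast
  then obtain x1 y1 where p: "(x1, y1) \<in> P" using tr_pair_neighbourE[OF v] by metis
  then have "x1 \<in> VG" using tr_pairD(2)[OF v] by blast
  then obtain g1 h1 g2 h2 where q: "(g1, h1) \<in> P" "(g2, h2) \<in> P" "EG x1 g1" "EG x1 g2" "h1 \<noteq> h2"
    using row_neighboursE[OF v] by metis
  then have "{(x1, y1), (g1, h1), (g2, h2)} \<subseteq> P" "card {(x1, y1), (g1, h1), (g2, h2)} = 3"
    using p G.adj_neq by auto
  then show ?thesis using card_mono[OF tr_pairD(3)[OF v]] by metis
qed

lemma transversal_triangleE:
  assumes v: "tr_pair P A" and "card P \<le> 3"
  obtains x1 y1 x2 y2 x3 y3 where "P = {(x1, y1), (x2, y2), (x3, y3)}"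
    "EG x1 x2" "EG x1 x3" "EG x2 x3" "EH y1 y2" "EH y1 y3" "EH y2 y3"
proof -
  obtain g h where "g \<in> VG" "h \<in> VH" using G.nonempty H.nonempty by blast
  then obtain x1 y1 where 1: "(x1, y1) \<in> P" "EG g x1" "EH h y1"
    using tr_pair_neighbourE[OF v] by metis
  then have "x1 \<in> VG" "y1 \<in> VH" using G.adj_vertices H.adj_vertices by blast+
  then obtain x2 y2 where 2: "(x2, y2) \<in> P" "EG x1 x2" "EH y1 y2"
    using tr_pair_neighbourE[OF v] by metis
  then have "y2 \<in> VH" using H.adj_vertices by blast
  then obtain x3 y3 where 3: "(x3, y3) \<in> P" "EG x1 x3" "EH y2 y3"
    using tr_pair_neighbourE[OF v \<open>x1 \<in> VG\<close>] by metis
  have sub: "{(x1, y1), (x2, y2), (x3, y3)} \<subseteq> P" using 1 2 3 by blast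
  have "card {(x1, y1), (x2, y2), (x3, y3)} = 3" using 2 3 G.adj_neq H.adj_neq by auto
  then have P: "P = {(x1, y1), (x2, y2), (x3, y3)}"
    using card_subset_eq[OF tr_pairD(3)[OF v] sub] card_mono[OF tr_pairD(3)[OF v] sub] assms(2)
    by simp
  have "x2 \<in> VG" using 2 G.adj_vertices by blast
  then obtain x y where "(x, y) \<in> P" "EG x2 x" "EH y1 y"
    using tr_pair_neighbourE[OF v _ \<open>y1 \<in> VH\<close>] by metis
  \<comment> \<open>the only element of P that can be adjacent to (x2, y1) is (x3, y3)\<close>
  then have "EG x2 x3" "EH y1 y3" unfolding P using 2 by auto
  then show ?thesis using that P 1 2 3 by blast
qed

lemma triangle_centered_if_card_le_3:
  assumes v: "tr_pair P A" and "card P \<le> 3"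
  shows "triangle_centered VG EG"
proof -
  obtain x1 y1 x2 y2 x3 y3 where P: "P = {(x1, y1), (x2, y2), (x3, y3)}"
    and e: "EG x1 x2" "EG x1 x3" "EG x2 x3" "EH y1 y2" "EH y1 y3" "EH y2 y3"
    using transversal_triangleE[OF assms] by metis
  have "(EG g x1 \<and> EG g x2) \<or> (EG g x1 \<and> EG g x3) \<or> (EG g x2 \<and> EG g x3)" if "g \<in> VG" for g
  proof -
    \<comment> \<open>the neighbour of (g, y_i) in P is not (x_i, y_i)\<close>
    have nb: "\<exists>x y. (x, y) \<in> P \<and> EG g x \<and> EH y' y" if "y' \<in> VH" for y'
      using tr_pair_neighbourE[OF v \<open>g \<in> VG\<close> that] by blast
    have "y1 \<in> VH" "y2 \<in> VH" "y3 \<in> VH" using e H.adj_vertices by blast+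
    then have "EG g x2 \<or> EG g x3" "EG g x1 \<or> EG g x3" "EG g x1 \<or> EG g x2"
      using nb unfolding P by fastforce+
    then show ?thesis by blast
  qed
  then show ?thesis using G.triangle_centered_iff e by blast
qed

lemma card_rows_add_two_le:
  assumes v: "tr_pair P A" and A: "A \<subseteq> {x} \<times> VH"
    and R: "x \<in> R" "R \<subseteq> VG" "\<And>g. g \<in> R \<Longrightarrow> \<not> EG x g"
  shows "card R * card VH + 2 \<le> card P"
proof -
  have rows: "R \<times> VH \<subseteq> P"
  proof clarify
    fix g h assume "g \<in> R" "h \<in> VH"
    have "\<not> EG g x" using R(3) \<open>g \<in> R\<close> G.adj_sym by blast
    moreover have "a = x" if "(a, b) \<in> A" for a b using A that by auto
    ultimately show "(g, h) \<in> P"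
      using R(2) \<open>g \<in> R\<close> \<open>h \<in> VH\<close> by (intro tr_pair_memI[OF v]) auto
  qed
  obtain g1 h1 g2 h2 where "(g1, h1) \<in> P" "(g2, h2) \<in> P" "EG x g1" "EG x g2" "h1 \<noteq> h2"
    using row_neighboursE[OF v] R(1,2) by blast
  moreover from this have "g1 \<notin> R" "g2 \<notin> R" using R(3) by blast+
  ultimately have "card (R \<times> VH) + 2 \<le> card P"
    using card_add_two_le[OF tr_pairD(3)[OF v] rows] by blast
  then show ?thesis by (simp add: card_cartesian_product)
qed

lemma card_row_le:
  assumes "tr_pair P A" "A \<subseteq> {x} \<times> VH" "x \<in> VG"
  shows "card VH + 2 \<le> card P"
proof -
  have "card {x} * card VH + 2 \<le> card P"
    by (rule card_rows_add_two_le[OF assms(1,2)]) (use assms(3) in auto)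
  then show ?thesis by simp
qed

lemma card_row_nonuniversal_le:
  assumes "tr_pair P A" "A \<subseteq> {x} \<times> VH" "x \<in> VG" "\<not> universal VG EG x"
  shows "2 * card VH + 2 \<le> card P"
proof -
  obtain g where "g \<in> VG" "g \<noteq> x" "\<not> EG x g" using G.non_universalE[OF assms(3,4)] .
  have "card {x, g} * card VH + 2 \<le> card P"
    by (rule card_rows_add_two_le[OF assms(1,2)]) (use assms(3) \<open>g \<in> VG\<close> \<open>\<not> EG x g\<close> in auto)
  then show ?thesis using \<open>g \<noteq> x\<close> by simp
qed

lemma row_universal:
  assumes "tr_pair P A" "A \<subseteq> {x} \<times> VH" "x \<in> VG" "card P < 2 * card VH + 2"
  shows "universal VG EG x"
  using card_row_nonuniversal_le[OF assms(1-3)] assms(4) by linarith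

lemma card_cross_le:
  assumes v: "tr_pair P {(x, y)}"
    and R: "x \<in> R" "R \<subseteq> VG" "\<And>g. g \<in> R \<Longrightarrow> \<not> EG x g"
  shows "card R * card VH + (card VG - card R) + 1 \<le> card P"
proof -
  let ?S = "R \<times> VH \<union> (VG - R) \<times> {y}"
  have "x \<in> VG" "y \<in> VH" using tr_pairD[OF v] by auto
  have S: "?S \<subseteq> P"
  proof clarify
    fix g h assume "(g, h) \<in> ?S"
    then have "g \<in> VG" "h \<in> VH" "g \<in> R \<or> h = y" using R(2) \<open>y \<in> VH\<close> by auto
    then show "(g, h) \<in> P"
      using R(3) G.adj_sym by (intro tr_pair_memI[OF v]) auto
  qed
  obtain g h where "(g, h) \<in> P" "EG x g" "EH y h"
    by (rule tr_pair_neighbourE[OF v \<open>x \<in> VG\<close> \<open>y \<in> VH\<close>])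
  moreover from this have "(g, h) \<notin> ?S" using R(3) by auto
  moreover have "finite ?S" using finite_subset[OF S tr_pairD(3)[OF v]] .
  ultimately have "card ?S + 1 \<le> card P"
    using card_mono[OF tr_pairD(3)[OF v], of "insert (g, h) ?S"] S by simp
  moreover have "card ?S = card R * card VH + (card VG - card R)"
    using R G.finite_vertices H.finite_vertices finite_subset[OF R(2)]
    by (subst card_Un_disjoint) (auto simp: card_cartesian_product card_Diff_subset)
  ultimately show ?thesis by linarith
qed

lemma card_singleton_le:
  assumes "tr_pair P {(x, y)}"
  shows "card VG + card VH \<le> card P"
proof -
  have "x \<in> VG" using tr_pairD[OF assms] by blast
  then have "card {x} * card VH + (card VG - card {x}) + 1 \<le> card P"
    by (intro card_cross_le[OF assms]) auto
  then show ?thesis using G.card_ge_2 by simp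
qed

lemma card_singleton_nonuniversal_le:
  assumes "tr_pair P {(x, y)}" "\<not> universal VG EG x"
  shows "2 * card VH + card VG \<le> card P + 1"
proof -
  have "x \<in> VG" using tr_pairD[OF assms(1)] by blast
  then obtain g where "g \<in> VG" "g \<noteq> x" "\<not> EG x g" using G.non_universalE assms(2) by metis
  then have "card {x, g} * card VH + (card VG - card {x, g}) + 1 \<le> card P"
    by (intro card_cross_le[OF assms(1)]) (use \<open>x \<in> VG\<close> in auto)
  then show ?thesis using \<open>g \<noteq> x\<close> G.card_ge_2 by simp
qed

lemma singleton_pairE:
  assumes "tr_pair P A" "card A = 1"
  obtains x y where "A = {(x, y)}" "x \<in> VG" "y \<in> VH"
  using assms tr_pairD[OF assms(1)] by (auto simp: card_1_singleton_iff)

lemma card_A_2E: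
  assumes v: "tr_pair P A" and "card A = 2"
  obtains (row) x where "x \<in> VG" "A \<subseteq> {x} \<times> VH"
    | (column) y where "y \<in> VH" "prod.swap ` A \<subseteq> {y} \<times> VG"
    | (rectangle) x1 y1 x2 y2 where "A = {(x1, y1), (x2, y2)}" "x1 \<noteq> x2" "y1 \<noteq> y2"
proof -
  obtain x1 y1 x2 y2 where A: "A = {(x1, y1), (x2, y2)}" "(x1, y1) \<noteq> (x2, y2)"
    using card_2_pairsE[OF \<open>card A = 2\<close>] by metis
  have "x1 \<in> VG" "y1 \<in> VH" using tr_pairD[OF v] A by auto
  consider "x1 = x2" | "y1 = y2" | "x1 \<noteq> x2" "y1 \<noteq> y2" by blast
  then show ?thesis
  proof cases
    case 1
    then have "A \<subseteq> {x1} \<times> VH" using A tr_pairD[OF v] by auto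
    then show ?thesis using row \<open>x1 \<in> VG\<close> by blast
  next
    case 2
    then have "prod.swap ` A \<subseteq> {y1} \<times> VG" using A tr_pairD[OF v] by auto
    then show ?thesis using column \<open>y1 \<in> VH\<close> by blast
  next
    case 3
    then show ?thesis using rectangle A(1) by blast
  qed
qed

lemma rectangle_subset:
  assumes v: "tr_pair P {(x1, y1), (x2, y2)}"
  shows "{(x1, y1), (x2, y2), (x1, y2), (x2, y1)} \<subseteq> P"
proof -
  have "x1 \<in> VG" "x2 \<in> VG" "y1 \<in> VH" "y2 \<in> VH" using tr_pairD[OF v] by auto
  then have "(x1, y2) \<in> P" "(x2, y1) \<in> P" by (auto intro!: tr_pair_memI[OF v])
  then show ?thesis using tr_pairD(1)[OF v] by blast
qed

lemma rectangle_universal: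
  assumes v: "tr_pair {(x1, y1), (x2, y2), (x1, y2), (x2, y1)} {(x1, y1), (x2, y2)}"
    and "x1 \<noteq> x2" "y1 \<noteq> y2"
  shows "universal VG EG x1"
proof -
  have V: "x1 \<in> VG" "y1 \<in> VH" "y2 \<in> VH" using tr_pairD[OF v] by auto
  obtain x y where "(x, y) \<in> {(x1, y1), (x2, y2), (x1, y2), (x2, y1)}" "EG x1 x" "EH y1 y"
    using tr_pair_neighbourE[OF v V(1,2)] by metis
  then have "EG x1 x2" by auto
  have "EG g x1" if "g \<in> VG" "g \<noteq> x1" "g \<noteq> x2" for g
  proof -
    have "(g, y2) \<notin> {(x1, y1), (x2, y2), (x1, y2), (x2, y1)}" using that by auto
    then obtain x y where "(x, y) \<in> {(x1, y1), (x2, y2)}" "EG g x" "EH y2 y"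
      using tr_pair_dominatedE[OF v \<open>g \<in> VG\<close> V(3)] by metis
    then show ?thesis by auto
  qed
  then show ?thesis using \<open>EG x1 x2\<close> V(1) G.adj_sym by (auto simp: universal_def)
qed

lemma rectangle_universal_if_card_le_5:
  assumes v: "tr_pair P {(x1, y1), (x2, y2)}" and "x1 \<noteq> x2" "y1 \<noteq> y2" "card P \<le> 5"
  shows "universal VG EG x1 \<or> universal VG EG x2"
proof -
  let ?Q = "{(x1, y1), (x2, y2), (x1, y2), (x2, y1)}"
  have Q: "?Q \<subseteq> P" "card ?Q = 4" using rectangle_subset[OF v] assms(2,3) by auto
  have V: "x1 \<in> VG" "x2 \<in> VG" "y1 \<in> VH" "y2 \<in> VH" using tr_pairD[OF v] by auto
  have no_two_more: False if "p \<in> P - ?Q" "q \<in> P - ?Q" "p \<noteq> q" for p q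
    using card_add_two_le[OF tr_pairD(3)[OF v] Q(1) that] Q(2) assms(4) by simp
  have "EG x1 x2"
  proof (rule ccontr)
    assume "\<not> EG x1 x2"
    obtain g1 h1 g2 h2 where "(g1, h1) \<in> P" "(g2, h2) \<in> P" "EG x1 g1" "EG x1 g2" "h1 \<noteq> h2"
      using row_neighboursE[OF v V(1)] by metis
    moreover from this have "g1 \<notin> {x1, x2}" "g2 \<notin> {x1, x2}" using \<open>\<not> EG x1 x2\<close> by auto
    ultimately show False using no_two_more[of "(g1, h1)" "(g2, h2)"] by auto
  qed
  show ?thesis
  proof (rule ccontr)
    assume "\<not> ?thesis"
    then obtain g1 g2 where g1: "g1 \<in> VG" "g1 \<noteq> x1" "\<not> EG x1 g1"
      and g2: "g2 \<in> VG" "g2 \<noteq> x2" "\<not> EG x2 g2"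
      using G.non_universalE V(1,2) by metis
    have "(g1, y2) \<in> P" "(g2, y1) \<in> P"
      using g1 g2 V G.adj_sym by (auto intro!: tr_pair_memI[OF v])
    moreover have "g1 \<noteq> x2" "g2 \<noteq> x1" using g1 g2 \<open>EG x1 x2\<close> G.adj_sym by blast+
    ultimately show False using no_two_more[of "(g1, y2)" "(g2, y1)"] g1 g2 assms(3) by auto
  qed
qed

lemma row_pair_third_column_false:
  assumes v: "tr_pair P {(x, y1), (x, y2), (x3, y3)}" (is "tr_pair P ?A")
    and "y1 \<noteq> y2" "y3 \<noteq> y1" "y3 \<noteq> y2" "card P \<le> 4"
  shows False
proof -
  have V: "x \<in> VG" "y3 \<in> VH" using tr_pairD[OF v] by auto
  have "card ?A = 3" using assms(2-4) by auto
  show False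
  proof (cases "x3 = x")
    case True
    then have "?A \<subseteq> {x} \<times> VH" using tr_pairD[OF v] by auto
    then have "3 \<le> card VH"
      using card_mono[of "{x} \<times> VH" ?A] H.finite_vertices \<open>card ?A = 3\<close> by (simp add: card_cartesian_product)
    then show False using card_row_le[OF v \<open>?A \<subseteq> {x} \<times> VH\<close> V(1)] assms(5) by simp
  next
    case False
    have "(x, y3) \<in> P" by (auto intro!: tr_pair_memI[OF v V])
    moreover have "(x, y3) \<notin> ?A" using False assms(3,4) by auto
    ultimately have "P = insert (x, y3) ?A"
      using tr_pairD[OF v] card_subset_eq[of P "insert (x, y3) ?A"] \<open>card ?A = 3\<close> assms(5)
        card_mono[of P "insert (x, y3) ?A"] by (simp add: insert_subsetI)
    moreover obtain p q where "(p, q) \<in> P" "EG x p" "EH y3 q"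
      using tr_pair_neighbourE[OF v V] by metis
    ultimately show False by auto
  qed
qed

lemma L_shape_universal:
  assumes v: "tr_pair P A" and A: "A = {(x, y), (x, y'), (x', y)}" "x' \<noteq> x" "y' \<noteq> y"
    and P: "P = insert b A"
  shows "universal VG EG x"
proof -
  have V: "x \<in> VG" "y \<in> VH" "y' \<in> VH" using tr_pairD[OF v] A by auto
  obtain p q where "(p, q) \<in> P" "EG x p" "EH y q" using tr_pair_neighbourE[OF v V(1,2)] by metis
  \<comment> \<open>no element of A is adjacent to (x, y), so b is\<close>
  then obtain gb hb where b: "b = (gb, hb)" "EG x gb" "EH y hb" using P A by auto
  have "EG x g" if g: "g \<in> VG" "g \<noteq> x" for g
  proof (rule ccontr)
    assume "\<not> EG x g"
    have "(g, y) \<in> P"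
      using A \<open>\<not> EG x g\<close> G.adj_sym by (auto intro!: tr_pair_memI[OF v g(1) V(2)])
    then have "g = x'" using P A b g(2) \<open>\<not> EG x g\<close> by auto
    then have "\<not> EG x x'" using \<open>\<not> EG x g\<close> by simp
    obtain p q where "(p, q) \<in> P" "EG x p" "EH y' q" using tr_pair_neighbourE[OF v V(1,3)] by metis
    then have "EH y' hb" using P A b \<open>\<not> EG x x'\<close> by auto
    then have "(x, hb) \<in> P"
      using A \<open>\<not> EG x x'\<close> by (auto intro!: tr_pair_memI[OF v V(1) H.adj_vertices(2)])
    then show False using P A b \<open>EH y' hb\<close> by auto
  qed
  then show ?thesis using V(1) by (simp add: universal_def)
qed

lemma transversal_edge:
  assumes v: "tr_pair P A" and A: "A = {(x1, y1), (x2, y2), (x3, y3)}" and P: "P = insert b A"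
    and "distinct [x1, x2, x3]" "distinct [y1, y2, y3]"
  shows "EG x1 x2"
proof -
  have V: "x1 \<in> VG" "x2 \<in> VG" "y3 \<in> VH" using tr_pairD[OF v] A by auto
  show ?thesis
  proof (cases "b = (x1, y3)")
    case False
    then have "(x1, y3) \<notin> P" using P A assms(4,5) by auto
    then obtain p q where "(p, q) \<in> A" "EG x1 p" "EH y3 q"
      using tr_pair_dominatedE[OF v V(1,3)] by metis
    then show ?thesis using A by auto
  next
    case True
    then have "(x2, y3) \<notin> P" using P A assms(4,5) by auto
    then obtain p q where "(p, q) \<in> A" "EG x2 p" "EH y3 q"
      using tr_pair_dominatedE[OF v V(2,3)] by metis
    then show ?thesis using A G.adj_sym by auto
  qed
qed

lemma transversal_common_non_neighbour_false:
  assumes v: "tr_pair P A" and A: "A = {(x1, y1), (x2, y2), (x3, y3)}" and P: "P = insert b A"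
    and "distinct [x1, x2, x3]" "distinct [y1, y2, y3]"
    and g: "g \<in> VG" "\<not> EG g x1" "\<not> EG g x2"
  shows False
proof -
  have "EG x1 x3" using transversal_edge[OF v _ P, of x1 y1 x3 y3 x2 y2] A assms(4,5) by auto
  have "y3 \<in> VH" using tr_pairD[OF v] A by auto
  have "(g, y3) \<in> P" using A g by (auto intro!: tr_pair_memI[OF v g(1) \<open>y3 \<in> VH\<close>])
  moreover have "(g, y3) \<notin> A" using A assms(5) g(2) \<open>EG x1 x3\<close> G.adj_sym by auto
  ultimately have "b = (g, y3)" using P by simp
  obtain p q where "(p, q) \<in> P" "EG g p" "EH y3 q"
    using tr_pair_neighbourE[OF v g(1) \<open>y3 \<in> VH\<close>] by metis
  then show False using P A \<open>b = (g, y3)\<close> g by auto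
qed

lemma transversal_triangle_centered:
  assumes v: "tr_pair P A" and A: "A = {(x1, y1), (x2, y2), (x3, y3)}" and P: "P = insert b A"
    and "distinct [x1, x2, x3]" "distinct [y1, y2, y3]"
  shows "triangle_centered VG EG"
proof -
  have A': "A = {(x1, y1), (x3, y3), (x2, y2)}" "A = {(x2, y2), (x3, y3), (x1, y1)}" using A by auto
  have "EG x1 x2" "EG x1 x3" "EG x2 x3"
    using transversal_edge[OF v A P] transversal_edge[OF v A'(1) P]
      transversal_edge[OF v A'(2) P] assms(4,5) by auto
  moreover have "(EG g x1 \<and> EG g x2) \<or> (EG g x1 \<and> EG g x3) \<or> (EG g x2 \<and> EG g x3)"
    if "g \<in> VG" for g
    using transversal_common_non_neighbour_false[OF v A P _ _ that]
      transversal_common_non_neighbour_false[OF v A'(1) P _ _ that]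
      transversal_common_non_neighbour_false[OF v A'(2) P _ _ that] assms(4,5) by auto
  ultimately show ?thesis using G.triangle_centered_iff by blast
qed

lemma small_factor_cases:
  assumes "(card VG = 2 \<and> card VH \<le> 3) \<or> (card VH = 2 \<and> card VG \<le> 3)"
  shows "(card VG = 2 \<and> 1 \<le> num_universal VH EH) \<or> (card VH = 2 \<and> 1 \<le> num_universal VG EG)"
  using assms G.exists_universal_if_card_le_3 H.exists_universal_if_card_le_3
    G.one_le_num_universal_iff H.one_le_num_universal_iff by blast

end

context graph_product
begin

lemma both_triangle_centered_if_card_le_3:
  assumes "tr_pair P A" "card P \<le> 3"
  shows "triangle_centered VG EG \<and> triangle_centered VH EH"
  using triangle_centered_if_card_le_3[OF assms]
    swapped.triangle_centered_if_card_le_3[OF tr_pair_swap[OF assms(1)]] assms(2) by simp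

lemma card_ge_4_if_card_A_2:
  assumes v: "tr_pair P A" and "card A = 2"
  shows "4 \<le> card P"
  using v \<open>card A = 2\<close>
proof (cases rule: card_A_2E)
  case (row x)
  then show ?thesis using card_row_le[OF v] H.card_ge_2 by fastforce
next
  case (column y)
  then show ?thesis using swapped.card_row_le[OF tr_pair_swap[OF v]] G.card_ge_2 by fastforce
next
  case (rectangle x1 y1 x2 y2)
  then have "card {(x1, y1), (x2, y2), (x1, y2), (x2, y1)} = 4" by auto
  then show ?thesis
    using rectangle_subset[OF v[unfolded rectangle(1)]] card_mono[OF tr_pairD(3)[OF v]] by metis
qed

lemma rectangle_four_universals:
  assumes v: "tr_pair P {(x1, y1), (x2, y2)}" and "x1 \<noteq> x2" "y1 \<noteq> y2" "card P \<le> 4"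
  shows "universal VG EG x1 \<and> universal VG EG x2 \<and> universal VH EH y1 \<and> universal VH EH y2"
proof -
  let ?Q = "{(x1, y1), (x2, y2), (x1, y2), (x2, y1)}"
  have Q: "?Q \<subseteq> P" "card ?Q = 4" using rectangle_subset[OF v] assms(2,3) by auto
  then have "P = ?Q"
    using card_subset_eq[OF tr_pairD(3)[OF v] Q(1)] card_mono[OF tr_pairD(3)[OF v] Q(1)] assms(4)
    by simp
  then have v1: "tr_pair {(x1, y1), (x2, y2), (x1, y2), (x2, y1)} {(x1, y1), (x2, y2)}"
    and v2: "tr_pair {(x2, y2), (x1, y1), (x2, y1), (x1, y2)} {(x2, y2), (x1, y1)}"
    using v by (simp_all add: insert_commute)
  have "swapped.tr_pair {(y1, x1), (y2, x2), (y1, x2), (y2, x1)} {(y1, x1), (y2, x2)}"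
    and "swapped.tr_pair {(y2, x2), (y1, x1), (y2, x1), (y1, x2)} {(y2, x2), (y1, x1)}"
    using tr_pair_swap[OF v1] by (simp_all add: insert_commute)
  then show ?thesis
    using rectangle_universal[OF v1] rectangle_universal[OF v2] swapped.rectangle_universal
      assms(2,3) by auto
qed

lemma shared_row_universal:
  assumes v: "tr_pair P A" and A: "A = {a, a', c}" "a \<noteq> a'" "c \<noteq> a" "c \<noteq> a'"
    and P: "P = insert b A" and "fst a = fst a'"
  shows "universal VG EG (fst a)"
proof -
  obtain x y1 y2 x3 y3 where a: "a = (x, y1)" "a' = (x, y2)" "c = (x3, y3)"
    using \<open>fst a = fst a'\<close> by (metis prod.collapse)
  have "card P \<le> 4" using P A card_length[of "[b, a, a', c]"] by simp
  consider "y3 \<noteq> y1" "y3 \<noteq> y2" | "y3 = y1" | "y3 = y2" by blast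
  then show ?thesis
  proof cases
    case 1
    then show ?thesis using row_pair_third_column_false[OF v[unfolded A(1) a]] a A \<open>card P \<le> 4\<close> by auto
  next
    case 2
    then show ?thesis using L_shape_universal[OF v _ _ _ P, of x y1 y2 x3] A a by auto
  next
    case 3
    then have "A = {(x, y2), (x, y1), (x3, y2)}" using A a by auto
    then show ?thesis using L_shape_universal[OF v _ _ _ P, of x y2 y1 x3] A a 3 by auto
  qed
qed

lemma shared_column_false:
  assumes v: "tr_pair P A" and A: "A = {a, a', c}" "a \<noteq> a'"
    and P: "card P \<le> 4" and "snd a = snd a'" and c: "fst c \<noteq> fst a" "fst c \<noteq> fst a'"
  shows False
proof -
  obtain y x1 x2 x3 y3 where a: "a = (x1, y)" "a' = (x2, y)" "c = (x3, y3)"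
    using \<open>snd a = snd a'\<close> by (metis prod.collapse)
  have "swapped.tr_pair (prod.swap ` P) {(y, x1), (y, x2), (y3, x3)}"
    using tr_pair_swap[OF v] A a by simp
  then show False
    by (rule swapped.row_pair_third_column_false) (use A a P c in auto)
qed

lemma card_A_3_universal_or_triangle_centered:
  assumes v: "tr_pair P A" and "card A = 3" "card P \<le> 4"
  shows "(\<exists>u. universal VG EG u) \<or> (triangle_centered VG EG \<and> triangle_centered VH EH)"
proof (cases "card P \<le> 3")
  case True
  then show ?thesis using both_triangle_centered_if_card_le_3[OF v] by blast
next
  case False
  then have "card (P - A) = 1"
    using assms tr_pairD[OF v] by (simp add: card_Diff_subset)
  then obtain b where "P - A = {b}" by (auto simp: card_1_singleton_iff)
  then have P: "P = insert b A" using tr_pairD(1)[OF v] by blast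
  show ?thesis
  proof (cases "\<exists>a\<in>A. \<exists>a'\<in>A. a \<noteq> a' \<and> fst a = fst a'")
    case True
    then obtain a a' c where "a \<noteq> a'" "fst a = fst a'" "A = {a, a', c}" "c \<noteq> a" "c \<noteq> a'"
      using card_3_thirdE[OF \<open>card A = 3\<close>] by metis
    then show ?thesis using shared_row_universal[OF v _ _ _ _ P] by blast
  next
    case fst_distinct: False
    show ?thesis
    proof (cases "\<exists>a\<in>A. \<exists>a'\<in>A. a \<noteq> a' \<and> snd a = snd a'")
      case True
      then obtain a a' c where "a \<noteq> a'" "snd a = snd a'" "A = {a, a', c}" "c \<noteq> a" "c \<noteq> a'"
        using card_3_thirdE[OF \<open>card A = 3\<close>] by metis
      then show ?thesis using shared_column_false[OF v] fst_distinct assms(3) by blast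
    next
      case False
      obtain x1 y1 x2 y2 x3 y3 where A: "A = {(x1, y1), (x2, y2), (x3, y3)}"
        and "distinct [(x1, y1), (x2, y2), (x3, y3)]"
        using \<open>card A = 3\<close> by (auto simp: card_3_iff)
      then have "distinct [x1, x2, x3]" "distinct [y1, y2, y3]"
        using fst_distinct False by (auto 0 3)
      moreover from this have "prod.swap ` A = {(y1, x1), (y2, x2), (y3, x3)}"
        "prod.swap ` P = insert (prod.swap b) (prod.swap ` A)" using A P by auto
      ultimately show ?thesis
        using transversal_triangle_centered[OF v A P]
          swapped.transversal_triangle_centered[OF tr_pair_swap[OF v]] by blast
    qed
  qed
qed

lemma card_A_2_cases:
  assumes v: "tr_pair P A" and "card A = 2" "card P \<le> 4"
  shows "(2 \<le> num_universal VG EG \<and> 2 \<le> num_universal VH EH)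
    \<or> (card VG = 2 \<and> 1 \<le> num_universal VH EH) \<or> (card VH = 2 \<and> 1 \<le> num_universal VG EG)"
  using v \<open>card A = 2\<close>
proof (cases rule: card_A_2E)
  case (row x)
  then have "card VH = 2" "universal VG EG x"
    using card_row_le[OF v] row_universal[OF v] assms(3) H.card_ge_2 by fastforce+
  then show ?thesis using G.one_le_num_universal_iff by blast
next
  case (column y)
  then have "card VG = 2" "universal VH EH y"
    using swapped.card_row_le[OF tr_pair_swap[OF v]] swapped.row_universal[OF tr_pair_swap[OF v]]
      assms(3) G.card_ge_2 by fastforce+
  then show ?thesis using H.one_le_num_universal_iff by blast
next
  case (rectangle x1 y1 x2 y2)
  then show ?thesis
    using rectangle_four_universals[OF v[unfolded rectangle(1)] _ _ assms(3)]
      G.two_le_num_universal_iff H.two_le_num_universal_iff by blast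
qed

lemma card_A_2_universal:
  assumes v: "tr_pair P A" and "card A = 2" "card P \<le> 5"
  shows "\<exists>u. universal VG EG u"
  using v \<open>card A = 2\<close>
proof (cases rule: card_A_2E)
  case (row x)
  then show ?thesis using row_universal[OF v] assms(3) H.card_ge_2 by fastforce
next
  case (column y)
  then have "card VG \<le> 3" using swapped.card_row_le[OF tr_pair_swap[OF v]] assms(3) by fastforce
  then show ?thesis using G.exists_universal_if_card_le_3 by blast
next
  case (rectangle x1 y1 x2 y2)
  then show ?thesis using rectangle_universal_if_card_le_5[OF v[unfolded rectangle(1)]] assms(3) by blast
qed

lemma weight_ge_4:
  assumes v: "tr_pair P A"
  shows "4 \<le> card P + card A"
proof (cases "A = {}")
  case True
  then have "P = VG \<times> VH" using v by (simp add: tr_pair_empty)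
  then have "card P = card VG * card VH" using card_product by simp
  then show ?thesis using card_product_ge G.card_ge_2 by linarith
next
  case False
  then have "1 \<le> card A" using tr_pairD(4)[OF v] by (simp add: Suc_le_eq card_gt_0_iff)
  then show ?thesis using card_ge_3[OF v] by simp
qed

lemma weight_le_5_imp_card_2:
  assumes v: "tr_pair P A" and w: "card P + card A \<le> 5"
  shows "card VG = 2 \<and> card VH = 2"
proof -
  have "card A \<le> 2" using card_ge_3[OF v] w by linarith
  then consider "card A = 0" | "card A = 1" | "card A = 2" by linarith
  then show ?thesis
  proof cases
    case 1
    then have "P = VG \<times> VH" using v tr_pairD(4)[OF v] by (simp add: tr_pair_empty)
    then have "card VG * card VH \<le> 5" using w 1 card_product by simp
    then show ?thesis using card_product_ge G.card_ge_2 H.card_ge_2 by linarith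
  next
    case 2
    then obtain x y where "A = {(x, y)}" using singleton_pairE[OF v] by metis
    then have "card VG + card VH \<le> card P" using card_singleton_le v by simp
    then show ?thesis using w G.card_ge_2 H.card_ge_2 2 by linarith
  next
    case 3
    then show ?thesis using card_ge_4_if_card_A_2[OF v] w by simp
  qed
qed

lemma weight_le_6_cases:
  assumes v: "tr_pair P A" and w: "card P + card A \<le> 6"
  shows "(2 \<le> num_universal VG EG \<and> 2 \<le> num_universal VH EH)
    \<or> (card VG = 2 \<and> 1 \<le> num_universal VH EH) \<or> (card VH = 2 \<and> 1 \<le> num_universal VG EG)
    \<or> (triangle_centered VG EG \<and> triangle_centered VH EH)"
proof -
  have "card A \<le> 3" using card_ge_3[OF v] w by linarith
  then consider "card A = 0" | "card A = 1" | "card A = 2" | "card P \<le> 3"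
    using w by linarith
  then show ?thesis
  proof cases
    case 1
    then have "P = VG \<times> VH" using v tr_pairD(4)[OF v] by (simp add: tr_pair_empty)
    then have "card VG * card VH \<le> 6" using w 1 card_product by simp
    moreover from this have "card VG \<le> 3" "card VH \<le> 3" using card_product_ge by linarith+
    ultimately have "(card VG = 2 \<and> card VH \<le> 3) \<or> (card VH = 2 \<and> card VG \<le> 3)"
      using G.card_ge_2 H.card_ge_2 by (cases "card VG = 3"; cases "card VH = 3") auto
    then show ?thesis using small_factor_cases by blast
  next
    case 2
    then obtain x y where "A = {(x, y)}" using singleton_pairE[OF v] by metis
    then have "card VG + card VH \<le> 5" using card_singleton_le v w 2 by fastforce
    then have "(card VG = 2 \<and> card VH \<le> 3) \<or> (card VH = 2 \<and> card VG \<le> 3)"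
      using G.card_ge_2 H.card_ge_2 by linarith
    then show ?thesis using small_factor_cases by blast
  next
    case 3
    then have "card P \<le> 4" using w by simp
    then show ?thesis using card_A_2_cases[OF v 3] by blast
  next
    case 4
    then show ?thesis using both_triangle_centered_if_card_le_3[OF v] by blast
  qed
qed

lemma weight_le_7_cases:
  assumes v: "tr_pair P A" and w: "card P + card A \<le> 7"
  shows "(\<exists>u. universal VG EG u) \<or> (triangle_centered VG EG \<and> triangle_centered VH EH)"
proof -
  have "card A \<le> card P" using card_mono[OF tr_pairD(3,1)[OF v]] .
  then have "card A \<le> 3" using w by linarith
  then consider "card A = 0" | "card A = 1" | "card A = 2" | "card A = 3" by linarith
  then show ?thesis
  proof cases
    case 1
    then have "P = VG \<times> VH" using v tr_pairD(4)[OF v] by (simp add: tr_pair_empty)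
    then have "card VG * card VH \<le> 7" using w 1 card_product by simp
    then have "card VG \<le> 3" using card_product_ge by linarith
    then show ?thesis using G.exists_universal_if_card_le_3 by blast
  next
    case 2
    then obtain x y where A: "A = {(x, y)}" using singleton_pairE[OF v] by metis
    show ?thesis
    proof (cases "universal VG EG x")
      case False
      then have "card VG \<le> 3"
        using card_singleton_nonuniversal_le[OF v[unfolded A]] H.card_ge_2 w 2 by simp
      then show ?thesis using G.exists_universal_if_card_le_3 by blast
    qed blast
  next
    case 3
    then show ?thesis using card_A_2_universal[OF v] w by simp
  next
    case 4
    then show ?thesis using card_A_3_universal_or_triangle_centered[OF v] w by simp
  qed
qed

end

section \<open>Upper bounds\<close>

context graph_product
begin

lemma gamma_prod_le_card_product: "gamma_prod \<le> card VG * card VH"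
  using gamma_tR_le_card[OF finite_product no_isolated_dprod[OF G.no_isolated H.no_isolated]]
  by (simp add: card_product)

lemma gamma_prod_le_gamma_t: "gamma_prod \<le> 2 * (gamma_t VG EG * gamma_t VH EH)"
proof -
  obtain DG DH where "is_tds VG EG DG" "card DG = gamma_t VG EG"
    and "is_tds VH EH DH" "card DH = gamma_t VH EH"
    using gamma_t_attained G.finite_vertices G.no_isolated H.finite_vertices H.no_isolated by metis
  then show ?thesis
    using gamma_tR_le_twice_tds[OF finite_product is_tds_dprod] by (metis card_cartesian_product)
qed

lemma gamma_prod_le_6_triangle_centered:
  assumes "triangle_centered VG EG" "triangle_centered VH EH"
  shows "gamma_prod \<le> 6"
proof -
  obtain x1 x2 x3 where x: "EG x1 x2" "EG x2 x3" "EG x1 x3"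
    and x': "\<forall>g\<in>VG. (EG g x1 \<and> EG g x2) \<or> (EG g x1 \<and> EG g x3) \<or> (EG g x2 \<and> EG g x3)"
    using assms(1) G.triangle_centered_iff by blast
  obtain y1 y2 y3 where y: "EH y1 y2" "EH y2 y3" "EH y1 y3"
    and y': "\<forall>h\<in>VH. (EH h y1 \<and> EH h y2) \<or> (EH h y1 \<and> EH h y3) \<or> (EH h y2 \<and> EH h y3)"
    using assms(2) H.triangle_centered_iff by blast
  let ?D = "{(x1, y1), (x2, y2), (x3, y3)}"
  \<comment> \<open>two of the three x's and two of the three y's always share an index\<close>
  have "is_tds (VG \<times> VH) (dprod_edges EG EH) ?D"
    using x y x' y' G.adj_vertices H.adj_vertices unfolding is_tds_def dprod_edges_def by fastforce
  then have "gamma_prod \<le> 2 * card ?D" by (rule gamma_tR_le_twice_tds[OF finite_product])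
  also have "\<dots> \<le> 2 * 3" using card_length[of "[(x1, y1), (x2, y2), (x3, y3)]"] by simp
  finally show ?thesis by simp
qed

lemma gamma_prod_le_6_universal_pairs:
  assumes u: "universal VG EG u1" "universal VG EG u2" "u1 \<noteq> u2"
    and v: "universal VH EH v1" "universal VH EH v2" "v1 \<noteq> v2"
  shows "gamma_prod \<le> 6"
proof -
  let ?P = "{u1, u2} \<times> {v1, v2}" and ?A = "{(u1, v1), (u2, v2)}"
  have uv: "u2 \<in> VG" "v2 \<in> VH" using u v by (simp_all add: universal_def)
  have "tr_pair ?P ?A"
  proof (rule tr_pairI)
    show "is_tds (VG \<times> VH) (dprod_edges EG EH) ?P"
      using is_tds_dprod[OF G.is_tds_universal[OF u(1) uv(1)] H.is_tds_universal[OF v(1) uv(2)]]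
        u(3) v(3) by simp
    show "?A \<subseteq> ?P" by auto
  next
    fix g h assume gh: "g \<in> VG" "h \<in> VH" "(g, h) \<notin> ?P"
    then consider "g \<noteq> u1" "h \<noteq> v1" | "g \<noteq> u2" "h \<noteq> v2" using u(3) v(3) by auto
    then show "\<exists>x y. (x, y) \<in> ?A \<and> EG g x \<and> EH h y"
    proof cases
      case 1
      then show ?thesis using gh G.universal_adj[OF u(1)] H.universal_adj[OF v(1)] by auto
    next
      case 2
      then show ?thesis using gh G.universal_adj[OF u(2)] H.universal_adj[OF v(2)] by auto
    qed
  qed
  then have "gamma_prod \<le> card ?P + card ?A" by (rule gamma_tR_le[OF finite_product])
  also have "\<dots> \<le> 6" using u(3) v(3) by (simp add: card_cartesian_product)
  finally show ?thesis .
qed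

lemma gamma_prod_le_6_card_2_universal:
  assumes "card VG = 2" and v: "universal VH EH v"
  shows "gamma_prod \<le> 6"
proof -
  obtain h where h: "h \<in> VH" "h \<noteq> v" using H.other_vertex by blast
  let ?P = "VG \<times> {v, h}" and ?A = "VG \<times> {v}"
  have "tr_pair ?P ?A"
  proof (rule tr_pairI)
    show "is_tds (VG \<times> VH) (dprod_edges EG EH) ?P"
      by (rule is_tds_dprod[OF _ H.is_tds_universal[OF v h]]) (simp add: is_tds_self_iff G.no_isolated)
    show "?A \<subseteq> ?P" by auto
  next
    fix g h' assume "g \<in> VG" "h' \<in> VH" "(g, h') \<notin> ?P"
    then have "EH h' v" using H.universal_adj[OF v] by simp
    obtain g' where "EG g g'" using G.neighbourE[OF \<open>g \<in> VG\<close>] .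
    then show "\<exists>x y. (x, y) \<in> ?A \<and> EG g x \<and> EH h' y"
      using \<open>EH h' v\<close> G.adj_vertices(2) by (intro exI[of _ g'] exI[of _ v]) simp
  qed
  then have "gamma_prod \<le> card ?P + card ?A" by (rule gamma_tR_le[OF finite_product])
  also have "\<dots> = 6" using assms(1) h(2) by (simp add: card_cartesian_product)
  finally show ?thesis .
qed

lemma gamma_prod_le_7_universal:
  assumes u: "universal VG EG u" and v: "universal VH EH v"
  shows "gamma_prod \<le> 7"
proof -
  obtain g h where gh: "g \<in> VG" "g \<noteq> u" "h \<in> VH" "h \<noteq> v"
    using G.other_vertex H.other_vertex by blast
  let ?P = "{u, g} \<times> {v, h}" and ?A = "{(u, v), (u, h), (g, v)}"
  have "tr_pair ?P ?A"
  proof (rule tr_pairI)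
    show "is_tds (VG \<times> VH) (dprod_edges EG EH) ?P"
      by (rule is_tds_dprod[OF G.is_tds_universal[OF u gh(1,2)] H.is_tds_universal[OF v gh(3,4)]])
    show "?A \<subseteq> ?P" by auto
  next
    fix g' h' assume gh': "g' \<in> VG" "h' \<in> VH" "(g', h') \<notin> ?P"
    have "EG u g" "EH v h" using u v gh by (simp_all add: universal_def)
    consider "g' \<noteq> u" "h' \<noteq> v" | "g' = u" "h' \<noteq> v" | "g' \<noteq> u" "h' = v"
      using gh'(3) by auto
    then show "\<exists>x y. (x, y) \<in> ?A \<and> EG g' x \<and> EH h' y"
    proof cases
      case 1
      then show ?thesis using gh' G.universal_adj[OF u] H.universal_adj[OF v] by auto
    next
      case 2
      then show ?thesis using gh' \<open>EG u g\<close> H.universal_adj[OF v] by auto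
    next
      case 3
      then show ?thesis using gh' \<open>EH v h\<close> G.universal_adj[OF u] by auto
    qed
  qed
  then have "gamma_prod \<le> card ?P + card ?A" by (rule gamma_tR_le[OF finite_product])
  also have "\<dots> \<le> 7"
    using gh card_length[of "[(u, v), (u, h), (g, v)]"] by (simp add: card_cartesian_product)
  finally show ?thesis .
qed

end

section \<open>The values 4 to 8\<close>

context graph_product
begin

lemma gamma_prod_ge_4: "4 \<le> gamma_prod"
  using gamma_prod_attained weight_ge_4 by metis

lemma gamma_prod_le_5_iff: "gamma_prod \<le> 5 \<longleftrightarrow> card VG = 2 \<and> card VH = 2"
proof
  assume "gamma_prod \<le> 5"
  then show "card VG = 2 \<and> card VH = 2" using gamma_prod_attained weight_le_5_imp_card_2 by metis
qed (use gamma_prod_le_card_product in simp)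

lemma gamma_prod_le_6_iff:
  "gamma_prod \<le> 6 \<longleftrightarrow>
     (2 \<le> num_universal VG EG \<and> 2 \<le> num_universal VH EH)
   \<or> (card VG = 2 \<and> 1 \<le> num_universal VH EH) \<or> (card VH = 2 \<and> 1 \<le> num_universal VG EG)
   \<or> (triangle_centered VG EG \<and> triangle_centered VH EH)" (is "_ \<longleftrightarrow> ?C")
proof
  assume "gamma_prod \<le> 6"
  then show ?C using gamma_prod_attained weight_le_6_cases by metis
next
  assume ?C
  then show "gamma_prod \<le> 6"
  proof (elim disjE conjE)
    assume "2 \<le> num_universal VG EG" "2 \<le> num_universal VH EH"
    then show ?thesis
      using G.two_le_num_universal_iff H.two_le_num_universal_iff gamma_prod_le_6_universal_pairs
      by metis
  next
    assume "card VG = 2" "1 \<le> num_universal VH EH"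
    then show ?thesis using H.one_le_num_universal_iff gamma_prod_le_6_card_2_universal by blast
  next
    assume "card VH = 2" "1 \<le> num_universal VG EG"
    then show ?thesis
      using G.one_le_num_universal_iff swapped.gamma_prod_le_6_card_2_universal gamma_prod_swap by metis
  next
    assume "triangle_centered VG EG" "triangle_centered VH EH"
    then show ?thesis by (rule gamma_prod_le_6_triangle_centered)
  qed
qed

lemma gamma_prod_le_7_iff:
  "gamma_prod \<le> 7 \<longleftrightarrow> (1 \<le> num_universal VG EG \<and> 1 \<le> num_universal VH EH)
     \<or> (triangle_centered VG EG \<and> triangle_centered VH EH)"
proof
  assume "gamma_prod \<le> 7"
  then obtain P A where "tr_pair P A" "card P + card A \<le> 7" using gamma_prod_attained by metis
  then have "(\<exists>u. universal VG EG u) \<or> (triangle_centered VG EG \<and> triangle_centered VH EH)"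
    "(\<exists>u. universal VH EH u) \<or> (triangle_centered VH EH \<and> triangle_centered VG EG)"
    using weight_le_7_cases swapped.weight_le_7_cases[OF tr_pair_swap] by simp_all
  then show "(1 \<le> num_universal VG EG \<and> 1 \<le> num_universal VH EH)
     \<or> (triangle_centered VG EG \<and> triangle_centered VH EH)"
    using G.one_le_num_universal_iff H.one_le_num_universal_iff by blast
qed (use gamma_prod_le_7_universal gamma_prod_le_6_triangle_centered
      G.one_le_num_universal_iff H.one_le_num_universal_iff in fastforce)

lemma gamma_prod_eq_4_iff: "gamma_prod = 4 \<longleftrightarrow> is_K2 VG EG \<and> is_K2 VH EH"
  unfolding G.is_K2_iff_card H.is_K2_iff_card
proof
  assume "gamma_prod = 4"
  then show "card VG = 2 \<and> card VH = 2" using gamma_prod_le_5_iff by simp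
next
  assume "card VG = 2 \<and> card VH = 2"
  then show "gamma_prod = 4" using gamma_prod_le_card_product gamma_prod_ge_4 by simp
qed

lemma gamma_prod_ne_5: "gamma_prod \<noteq> 5"
proof
  assume "gamma_prod = 5"
  then have "card VG = 2 \<and> card VH = 2" using gamma_prod_le_5_iff by simp
  then show False using gamma_prod_le_card_product \<open>gamma_prod = 5\<close> by simp
qed

lemma gamma_prod_eq_6_iff:
  "gamma_prod = 6 \<longleftrightarrow>
     (2 \<le> num_universal VG EG \<and> 2 \<le> num_universal VH EH \<and> (3 \<le> card VG \<or> 3 \<le> card VH))
   \<or> (is_K2 VG EG \<and> 3 \<le> card VH \<and> 1 \<le> num_universal VH EH)
   \<or> (is_K2 VH EH \<and> 3 \<le> card VG \<and> 1 \<le> num_universal VG EG)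
   \<or> (triangle_centered VG EG \<and> triangle_centered VH EH)"
proof -
  have "gamma_prod = 6 \<longleftrightarrow> gamma_prod \<le> 6 \<and> \<not> gamma_prod \<le> 5" by linarith
  then show ?thesis
    unfolding gamma_prod_le_6_iff gamma_prod_le_5_iff G.is_K2_iff_card H.is_K2_iff_card
    using G.card_ge_2 H.card_ge_2
      G.card_ge_3_if_triangle_centered H.card_ge_3_if_triangle_centered by auto
qed

lemma gamma_prod_eq_7_iff:
  "gamma_prod = 7 \<longleftrightarrow>
     1 \<le> num_universal VG EG \<and> 1 \<le> num_universal VH EH
   \<and> ((num_universal VG EG = 1 \<and> \<not> is_K2 VH EH) \<or> (num_universal VH EH = 1 \<and> \<not> is_K2 VG EG))
   \<and> \<not> (triangle_centered VG EG \<and> triangle_centered VH EH)"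
proof -
  have "gamma_prod = 7 \<longleftrightarrow> gamma_prod \<le> 7 \<and> \<not> gamma_prod \<le> 6" by linarith
  then show ?thesis
    unfolding gamma_prod_le_7_iff gamma_prod_le_6_iff G.is_K2_iff_card H.is_K2_iff_card
    using G.num_universal_card_2 H.num_universal_card_2 by auto
qed

lemma gamma_prod_eq_8:
  assumes "\<not> (1 \<le> num_universal VG EG \<and> 1 \<le> num_universal VH EH)"
    and "gamma_t VG EG = 2" "gamma_t VH EH = 2"
    and "\<not> (triangle_centered VG EG \<and> triangle_centered VH EH)"
  shows "gamma_prod = 8"
proof -
  have "gamma_prod \<le> 8" using gamma_prod_le_gamma_t assms(2,3) by simp
  moreover have "\<not> gamma_prod \<le> 7" using gamma_prod_le_7_iff assms(1,4) by blast
  ultimately show ?thesis by linarith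
qed

end

theorem theorem3p1:
  fixes VG :: "'a set" and EG :: "'a \<Rightarrow> 'a \<Rightarrow> bool"
    and VH :: "'b set" and EH :: "'b \<Rightarrow> 'b \<Rightarrow> bool"
  assumes G: "simple_graph VG EG" "no_isolated VG EG"
      and H: "simple_graph VH EH" "no_isolated VH EH"
  defines "\<gamma> \<equiv> gamma_tR (VG \<times> VH) (dprod_edges EG EH)"
  shows "\<gamma> \<notin> {1, 2, 3, 5}
    \<and> (\<gamma> = 4 \<longleftrightarrow> is_K2 VG EG \<and> is_K2 VH EH)
    \<and> (\<gamma> = 6 \<longleftrightarrow>
           (2 \<le> num_universal VG EG \<and> 2 \<le> num_universal VH EH \<and> (3 \<le> card VG \<or> 3 \<le> card VH))
         \<or> (is_K2 VG EG \<and> 3 \<le> card VH \<and> 1 \<le> num_universal VH EH)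
         \<or> (is_K2 VH EH \<and> 3 \<le> card VG \<and> 1 \<le> num_universal VG EG)
         \<or> (triangle_centered VG EG \<and> triangle_centered VH EH))
    \<and> (\<gamma> = 7 \<longleftrightarrow>
           1 \<le> num_universal VG EG \<and> 1 \<le> num_universal VH EH
         \<and> ((num_universal VG EG = 1 \<and> \<not> is_K2 VH EH) \<or> (num_universal VH EH = 1 \<and> \<not> is_K2 VG EG))
         \<and> \<not> (triangle_centered VG EG \<and> triangle_centered VH EH))
    \<and> (\<not> (1 \<le> num_universal VG EG \<and> 1 \<le> num_universal VH EH)
         \<and> gamma_t VG EG = 2 \<and> gamma_t VH EH = 2
         \<and> \<not> (triangle_centered VG EG \<and> triangle_centered VH EH)
         \<longrightarrow> \<gamma> = 8)"
proof (cases "VG = {} \<or> VH = {}")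
  case True
  then have "\<gamma> = 0" unfolding \<gamma>_def by auto
  with True show ?thesis by (auto dest: card_is_K2)
next
  case False
  then interpret graph_product VG EG VH EH
    using G H by unfold_locales auto
  show ?thesis
    unfolding \<gamma>_def
    using gamma_prod_ge_4 gamma_prod_ne_5 gamma_prod_eq_4_iff gamma_prod_eq_6_iff
      gamma_prod_eq_7_iff gamma_prod_eq_8 by auto
qed

end
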